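(* Let $O$, $A$, $\mathcal A_O$ be as in the context, and let $\Omega=\{\omega_1,\dots,\omega_N\}\subseteq A^m$. Let $R$ be a matrix over $O$ whose rows generate the left submodule $\bigcap_{i=1}^N\ker(\kappa_{\omega_i})\subseteq O^{1\times m}$. Then $\{g\in\mathcal A_O^m:R\bullet g=0\}$ is the VMPUM of $\Omega$: it contains $\Omega$, and it is contained in $\{g\in\mathcal A_O^m:R'\bullet g=0\}$ for every matrix $R'\in O^{r'\times m}$ with $R'\bullet\omega_i=0$ for all $i$.
   Context: Let $K$ be a field, $A=K[t_1,\dots,t_n]$, and $O=A[\partial_1;\sigma_1,\delta_1]\cdots[\partial_s;\sigma_s,\delta_s]$ a left Noetherian Ore algebra (iterated Ore extension with commuting $\partial_i$, commuting $\sigma_i,\delta_j$, injective $K$-algebra endomorphisms $\sigma_i$ and $\sigma_i$-derivations $\delta_i$ preserving $A$, $\sigma_i(\partial_j)=\partial_j$, $\delta_i(\partial_j)=0$; multiplication via $\partial_ia=\sigma_i(a)\partial_i+\delta_i(a)$). $A$ is a left $O$-module via $\partial_i\bullet p=\delta_i(p)$, $a\bullet p=ap$. $\mathcal A_O$ is a $K$-vector space of functions with a left $O$-module structure containing $A$ as an $O$-submodule. For $R\in O^{r\times m}$, $(R\bullet g)_i=\sum_jR_{ij}\bullet g_j$. For $p\in A^m$, $\ker(\kappa_p)=\{o\in O^{1\times m}:\sum_io_i\bullet p_i=0\}$ (the kernel of $[o_1,\dots,o_m]\mapsto\sum_io_i[p_i]\in O/{}_O\langle\partial_1,\dots,\partial_s\rangle$).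 A behavior is a set $\{g\in\mathcal A_O^m:R\bullet g=0\}$; the VMPUM of $\Omega$ is a behavior containing $\Omega$ and contained in every behavior containing $\Omega$. *)

theory Defs
  imports Main
begin

text \<open>The Ore algebra O is a (not necessarily commutative) ring
  type 'o; the function space is a set F of elements of an additive group 'f,
  with a left O-action act (written o \<bullet> f in the paper); A is an O-submodule of F.
  Vectors of length m are functions nat \<Rightarrow> _ (only indices j < m matter / are nonzero),
  matrices with r rows are functions nat \<Rightarrow> nat \<Rightarrow> 'o (entries i < r, j < m).\<close>

definition left_module_on :: "('o::ring_1 \<Rightarrow> 'f::ab_group_add \<Rightarrow> 'f) \<Rightarrow> 'f set \<Rightarrow> bool" where
  "left_module_on act F \<longleftrightarrow>
     0 \<in> F \<and> (\<forall>f\<in>F. \<forall>g\<in>F. f + g \<in> F) \<and> (\<forall>f\<in>F. - f \<in> F) \<and>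
     (\<forall>a f. f \<in> F \<longrightarrow> act a f \<in> F) \<and>
     (\<forall>a b f. f \<in> F \<longrightarrow> act (a + b) f = act a f + act b f) \<and>
     (\<forall>a f g. f \<in> F \<longrightarrow> g \<in> F \<longrightarrow> act a (f + g) = act a f + act a g) \<and>
     (\<forall>a b f. f \<in> F \<longrightarrow> act (a * b) f = act a (act b f)) \<and>
     (\<forall>f. f \<in> F \<longrightarrow> act 1 f = f)"

definition submodule_on :: "('o::ring_1 \<Rightarrow> 'f::ab_group_add \<Rightarrow> 'f) \<Rightarrow> 'f set \<Rightarrow> 'f set \<Rightarrow> bool" where
  "submodule_on act A F \<longleftrightarrow> A \<subseteq> F \<and> left_module_on act A"

definition rowvecs :: "nat \<Rightarrow> (nat \<Rightarrow> 'o::zero) set" where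
  "rowvecs m = {v. \<forall>j\<ge>m. v j = 0}"

definition vecs_in :: "'f::zero set \<Rightarrow> nat \<Rightarrow> (nat \<Rightarrow> 'f) set" where
  "vecs_in S m = {g. (\<forall>j<m. g j \<in> S) \<and> (\<forall>j\<ge>m. g j = 0)}"

definition row_span :: "(nat \<Rightarrow> nat \<Rightarrow> 'o::ring_1) \<Rightarrow> nat \<Rightarrow> nat \<Rightarrow> (nat \<Rightarrow> 'o) set" where
  "row_span R r m = {v \<in> rowvecs m. \<exists>c. \<forall>j<m. v j = (\<Sum>k<r. c k * R k j)}"

definition kappa_ker :: "('o::ring_1 \<Rightarrow> 'f::ab_group_add \<Rightarrow> 'f) \<Rightarrow> nat \<Rightarrow> (nat \<Rightarrow> 'f) \<Rightarrow> (nat \<Rightarrow> 'o) set" where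
  "kappa_ker act m p = {v \<in> rowvecs m. (\<Sum>j<m. act (v j) (p j)) = 0}"

definition behavior :: "('o::ring_1 \<Rightarrow> 'f::ab_group_add \<Rightarrow> 'f) \<Rightarrow> 'f set \<Rightarrow> nat \<Rightarrow>
    (nat \<Rightarrow> nat \<Rightarrow> 'o) \<Rightarrow> nat \<Rightarrow> (nat \<Rightarrow> 'f) set" where
  "behavior act F m R r = {g \<in> vecs_in F m. \<forall>i<r. (\<Sum>j<m. act (R i j) (g j)) = 0}"

definition is_behavior :: "('o::ring_1 \<Rightarrow> 'f::ab_group_add \<Rightarrow> 'f) \<Rightarrow> 'f set \<Rightarrow> nat \<Rightarrow>
    (nat \<Rightarrow> 'f) set \<Rightarrow> bool" where
  "is_behavior act F m B \<longleftrightarrow> (\<exists>R r. B = behavior act F m R r)"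

definition is_VMPUM :: "('o::ring_1 \<Rightarrow> 'f::ab_group_add \<Rightarrow> 'f) \<Rightarrow> 'f set \<Rightarrow> nat \<Rightarrow>
    (nat \<Rightarrow> 'f) set \<Rightarrow> (nat \<Rightarrow> 'f) set \<Rightarrow> bool" where
  "is_VMPUM act F m B \<Omega> \<longleftrightarrow> is_behavior act F m B \<and> \<Omega> \<subseteq> B \<and>
     (\<forall>B'. is_behavior act F m B' \<and> \<Omega> \<subseteq> B' \<longrightarrow> B \<subseteq> B')"

end

theory Submission
  imports Defs
begin

(* Write B(R) for the behavior {g \<in> F^m. R \<bullet> g = 0}.
   The whole argument rests on one linear-algebra fact: if g \<in> B(R), then every
   row vector v in the left O-span of the rows of R also annihilates g, because
   v = \<Sum>k c_k R_k gives v \<bullet> g = \<Sum>k c_k \<bullet> (R_k \<bullet> g) = 0.  Consequently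
   B(R) \<subseteq> B(R') as soon as every row of R' lies in the row span of R.
   For the theorem the row span of R is the intersection of the kernels of the
   maps kappa_{\<omega>_i}.  (1) Each row of R lies in its own span, so it annihilates
   every \<omega>_i, whence \<Omega> \<subseteq> B(R) (the \<omega>_i are in A^m \<subseteq> F^m).  (2) If R' annihilates
   all \<omega>_i, each row of R' lies in every kernel, hence in the span of R, so
   B(R) \<subseteq> B(R').  (3) Any behavior containing \<Omega> is some B(R') with R' annihilating
   \<Omega>, so (2) gives minimality, i.e. B(R) is the VMPUM. *)

lemma left_module_onD:
  assumes "left_module_on act F"
  shows left_module_on_zero: "0 \<in> F"
    and left_module_on_add: "f \<in> F \<Longrightarrow> g \<in> F \<Longrightarrow> f + g \<in> F"
    and left_module_on_act: "f \<in> F \<Longrightarrow> act a f \<in> F"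
    and left_module_on_distrib_left: "f \<in> F \<Longrightarrow> act (a + b) f = act a f + act b f"
    and left_module_on_distrib_right:
      "f \<in> F \<Longrightarrow> g \<in> F \<Longrightarrow> act a (f + g) = act a f + act a g"
    and left_module_on_mult: "f \<in> F \<Longrightarrow> act (a * b) f = act a (act b f)"
  using assms unfolding left_module_on_def by simp_all

lemma act_zero_right:
  assumes "left_module_on act F"
  shows "act a 0 = 0"
proof -
  have "act a (0 + 0) = act a 0 + act a 0"
    using left_module_on_distrib_right[OF assms] left_module_on_zero[OF assms] by blast
  then show ?thesis by simp
qed

lemma act_zero_left:
  assumes "left_module_on act F" and "f \<in> F"
  shows "act 0 f = 0"
proof -
  have "act (0 + 0) f = act 0 f + act 0 f"
    using left_module_on_distrib_left[OF assms] .
  then show ?thesis by simp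
qed

lemma act_sum_left:
  assumes "left_module_on act F" and "f \<in> F"
  shows "act (\<Sum>k\<in>K. c k) f = (\<Sum>k\<in>K. act (c k) f)"
proof (induction K rule: infinite_finite_induct)
  case (insert x K)
  then show ?case by (simp add: left_module_on_distrib_left[OF assms])
qed (simp_all add: act_zero_left[OF assms])

lemma sum_in_module:
  assumes "left_module_on act F" and "\<And>k. k \<in> K \<Longrightarrow> h k \<in> F"
  shows "(\<Sum>k\<in>K. h k) \<in> F"
  using assms(2)
proof (induction K rule: infinite_finite_induct)
  case (insert x K)
  then show ?case by (simp add: left_module_on_add[OF assms(1)])
qed (simp_all add: left_module_on_zero[OF assms(1)])

lemma act_sum_right:
  assumes "left_module_on act F" and "\<And>k. k \<in> K \<Longrightarrow> h k \<in> F"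
  shows "act a (\<Sum>k\<in>K. h k) = (\<Sum>k\<in>K. act a (h k))"
  using assms(2)
proof (induction K rule: infinite_finite_induct)
  case (insert x K)
  have "sum h K \<in> F" using sum_in_module[OF assms(1)] insert.prems by blast
  then show ?case
    using insert by (simp add: left_module_on_distrib_right[OF assms(1)])
qed (simp_all add: act_zero_right[OF assms(1)])

lemma row_in_row_span:
  assumes "k < r"
  shows "(\<lambda>j. if j < m then R k j else 0) \<in> row_span R r m"
proof -
  have "(\<Sum>k'<r. (if k' = k then 1 else 0) * R k' j) = (\<Sum>k'<r. if k' = k then R k' j else 0)"
    for j by (rule sum.cong) auto
  then have "R k j = (\<Sum>k'<r. (if k' = k then 1 else 0) * R k' j)" for j
    using assms by simp
  then show ?thesis unfolding row_span_def rowvecs_def by auto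
qed

text \<open>Central fact: a row vector in the left span of the rows of R annihilates every
  trajectory of the behavior of R, since v = \<Sum>k c_k R_k gives
  v \<bullet> g = \<Sum>k c_k \<bullet> (R_k \<bullet> g).\<close>
lemma row_span_annihilates_behavior:
  assumes M: "left_module_on act F"
    and v: "v \<in> row_span R r m"
    and g: "g \<in> behavior act F m R r"
  shows "(\<Sum>j<m. act (v j) (g j)) = 0"
proof -
  obtain c where c: "\<And>j. j < m \<Longrightarrow> v j = (\<Sum>k<r. c k * R k j)"
    using v unfolding row_span_def by blast
  have gF: "\<And>j. j < m \<Longrightarrow> g j \<in> F" and gR: "\<And>k. k < r \<Longrightarrow> (\<Sum>j<m. act (R k j) (g j)) = 0"
    using g unfolding behavior_def vecs_in_def by auto
  have "(\<Sum>j<m. act (v j) (g j)) = (\<Sum>j<m. \<Sum>k<r. act (c k) (act (R k j) (g j)))"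
    using c gF by (simp add: act_sum_left[OF M] left_module_on_mult[OF M])
  also have "\<dots> = (\<Sum>k<r. \<Sum>j<m. act (c k) (act (R k j) (g j)))"
    by (rule sum.swap)
  also have "\<dots> = (\<Sum>k<r. act (c k) (\<Sum>j<m. act (R k j) (g j)))"
    using gF by (intro sum.cong refl act_sum_right[OF M, symmetric]) (simp add: left_module_on_act[OF M])
  also have "\<dots> = 0"
    using gR by (simp add: act_zero_right[OF M])
  finally show ?thesis .
qed

lemma behavior_subset_if_rows_in_span:
  assumes M: "left_module_on act F"
    and rows: "\<And>l. l < r' \<Longrightarrow> (\<lambda>j. if j < m then R' l j else 0) \<in> row_span R r m"
  shows "behavior act F m R r \<subseteq> behavior act F m R' r'"
proof
  fix g assume g: "g \<in> behavior act F m R r"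
  have "(\<Sum>j<m. act (R' l j) (g j)) = 0" if "l < r'" for l
    using row_span_annihilates_behavior[OF M rows[OF that] g] by simp
  then show "g \<in> behavior act F m R' r'"
    using g unfolding behavior_def by blast
qed

lemma rows_in_kappa_kers:
  assumes "\<forall>i<N. \<forall>l<r'. (\<Sum>j<m. act (R' l j) (\<omega> i j)) = 0" and "l < r'"
  shows "(\<lambda>j. if j < m then R' l j else 0) \<in> rowvecs m \<inter> (\<Inter>i\<in>{..<N}. kappa_ker act m (\<omega> i))"
  using assms unfolding kappa_ker_def rowvecs_def by auto

theorem theorem4p5:
  fixes act :: "'o::ring_1 \<Rightarrow> 'f::ab_group_add \<Rightarrow> 'f"
    and F A :: "'f set"
    and m N r :: nat
    and \<omega> :: "nat \<Rightarrow> nat \<Rightarrow> 'f"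
    and R :: "nat \<Rightarrow> nat \<Rightarrow> 'o"
  assumes "left_module_on act F"
    and "submodule_on act A F"
    and "\<forall>i<N. \<omega> i \<in> vecs_in A m"
    and "row_span R r m = rowvecs m \<inter> (\<Inter>i\<in>{..<N}. kappa_ker act m (\<omega> i))"
  shows "is_VMPUM act F m (behavior act F m R r) (\<omega> ` {..<N}) \<and>
         (\<forall>R' r'. (\<forall>i<N. \<forall>l<r'. (\<Sum>j<m. act (R' l j) (\<omega> i j)) = 0) \<longrightarrow>
            behavior act F m R r \<subseteq> behavior act F m R' r')"
proof -
  note M = assms(1) and span = assms(4)
  have minimal: "behavior act F m R r \<subseteq> behavior act F m R' r'"
    if annihilates: "\<forall>i<N. \<forall>l<r'. (\<Sum>j<m. act (R' l j) (\<omega> i j)) = 0" for R' r'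
  proof (rule behavior_subset_if_rows_in_span[OF M])
    show "(\<lambda>j. if j < m then R' l j else 0) \<in> row_span R r m" if "l < r'" for l
      unfolding span using rows_in_kappa_kers[OF annihilates that] .
  qed
  have contains: "\<omega> ` {..<N} \<subseteq> behavior act F m R r"
  proof (rule image_subsetI)
    fix i assume i: "i \<in> {..<N}"
    have "\<omega> i \<in> vecs_in F m"
      using assms(2,3) i unfolding submodule_on_def vecs_in_def by auto
    moreover have "(\<Sum>j<m. act (R k j) (\<omega> i j)) = 0" if "k < r" for k
      using row_in_row_span[OF that, of m R] i unfolding span kappa_ker_def by auto
    ultimately show "\<omega> i \<in> behavior act F m R r" unfolding behavior_def by blast
  qed
  have "behavior act F m R r \<subseteq> B'"
    if B'_behavior: "is_behavior act F m B'" and \<Omega>: "\<omega> ` {..<N} \<subseteq> B'" for B'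
  proof -
    obtain R' r' where B': "B' = behavior act F m R' r'"
      using B'_behavior unfolding is_behavior_def by blast
    have "\<forall>i<N. \<forall>l<r'. (\<Sum>j<m. act (R' l j) (\<omega> i j)) = 0"
      using \<Omega> unfolding B' behavior_def by auto
    then show ?thesis using minimal B' by blast
  qed
  then have "is_VMPUM act F m (behavior act F m R r) (\<omega> ` {..<N})"
    using contains unfolding is_VMPUM_def is_behavior_def by blast
  then show ?thesis using minimal by blast
qed

end
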